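(* Consider Algorithm 3 (described in the context) under the Standing Assumption, Matrix Assumption and Gradient Assumption of the context. For all $k\in\mathbb{N}$, $$g_k^Td_k\ge\mathbb{E}_k[\bar g_k^T\bar d_k]\ge g_k^Td_k-\zeta^{-1}M\qquad\text{and}\qquad d_k^TH_kd_k\le\mathbb{E}_k[\bar d_k^TH_k\bar d_k].$$
   Context: Problem: $\min_x f(x)$ s.t. $c(x)=0$, $f(x)=\mathbb{E}[F(x,\omega)]$, $c:\mathbb{R}^n\to\mathbb{R}^m$ deterministic. Notation: $g_k=\nabla f(x_k)$, $c_k=c(x_k)$, $J_k=\nabla c(x_k)^T$; $\Delta q(x,\tau,g,H,d)=-\tau(g^Td+\frac12\max\{d^THd,0\})+\|c(x)\|_1$. Standing Assumption: an open convex set $\mathcal X$ contains all iterates; $f$ is $C^1$, bounded below on $\mathcal X$, $\nabla f$ bounded and $L$-Lipschitz on $\mathcal X$; $c$, $\nabla c^T$ bounded on $\mathcal X$; $\nabla c_i$ is $\gamma_i$-Lipschitz on $\mathcal X$; singular values of $\nabla c(x)^T$ bounded away from zero uniformly over $\mathcal X$; $\Gamma:=\sum_i\gamma_i$. Matrix Assumption: deterministic symmetric $H_k$, chosen independently of the stochastic gradients, with $\|H_k\|_2\le\kappa_H$ and $u^TH_ku\ge\zeta\|u\|_2^2$ whenever $J_ku=0$. Algorithm 3 (inputs $x_0$, $\bar\tau_{-1}>0$, $\epsilon,\sigma\in(0,1)$, $\bar\xi_{-1}>0$, $\{\beta_k\}\subset(0,1]$, $\theta\ge0$): at iteration $k$,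 obtain stochastic gradient $\bar g_k$; $(\bar d_k,\bar y_k)$ solves $H_k\bar d_k+J_k^T\bar y_k=-\bar g_k$, $J_k\bar d_k=-c_k$ (assumed $\bar d_k\neq0$). $\bar\tau_k^{trial}=\infty$ if $\bar g_k^T\bar d_k+\max\{\bar d_k^TH_k\bar d_k,0\}\le0$, else $\frac{(1-\sigma)\|c_k\|_1}{\bar g_k^T\bar d_k+\max\{\bar d_k^TH_k\bar d_k,0\}}$; $\bar\tau_k=\bar\tau_{k-1}$ if $\bar\tau_{k-1}\le\bar\tau_k^{trial}$, else $(1-\epsilon)\bar\tau_k^{trial}$. $\bar\xi_k^{trial}=\frac{\Delta q(x_k,\bar\tau_k,\bar g_k,H_k,\bar d_k)}{\bar\tau_k\|\bar d_k\|_2^2}$; $\bar\xi_k=\bar\xi_{k-1}$ if $\bar\xi_{k-1}\le\bar\xi_k^{trial}$, else $(1-\epsilon)\bar\xi_k^{trial}$. With $D_k=(\bar\tau_kL+\Gamma)\|\bar d_k\|_2^2$, $\hat a_k=\beta_k\Delta q(x_k,\bar\tau_k,\bar g_k,H_k,\bar d_k)/D_k$, $\tilde a_k=\hat a_k-4\|c_k\|_1/D_k$, project both onto $[a_k,a_k+\theta\beta_k^2]$ with $a_k=\frac{\beta_k\bar\xi_k\bar\tau_k}{\bar\tau_kL+\Gamma}$ to get $\widehat\alpha_k,\widetilde\alpha_k$; $\bar\alpha_k=\widehat\alpha_k$ if $\widehat\alpha_k<1$, $1$ if $\widetilde\alpha_k\le1\le\widehat\alpha_k$, $\widetilde\alpha_k$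 if $\widetilde\alpha_k>1$; $x_{k+1}=x_k+\bar\alpha_k\bar d_k$. Gradient Assumption: $\mathbb{E}_k[\bar g_k]=g_k$ and $\mathbb{E}_k[\|\bar g_k-g_k\|_2^2]\le M$, where $\mathbb{E}_k$ is expectation w.r.t. $\omega$ conditioned on the algorithm having reached $x_k$ at iteration $k$. Deterministic counterpart: $(d_k,y_k)$ solves $H_kd_k+J_k^Ty_k=-g_k$, $J_kd_k=-c_k$. *)

theory Defs
  imports "HOL-Probability.Probability"
begin

text \<open>Standing Assumption on the open convex set X containing all iterates.
  f : real^'n -> real with gradient gradf, c : real^'n -> real^'m with Jacobian Jc
  (so Jc x = nabla c(x)^T, an m x n matrix whose i-th row is nabla c_i(x)^T).\<close>
definition standing_assumption ::
  "(real^'n) set \<Rightarrow> (real^'n \<Rightarrow> real) \<Rightarrow> (real^'n \<Rightarrow> real^'n) \<Rightarrow>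
   (real^'n \<Rightarrow> real^'m) \<Rightarrow> (real^'n \<Rightarrow> real^'n^'m) \<Rightarrow> real \<Rightarrow> ('m \<Rightarrow> real) \<Rightarrow> bool" where
  "standing_assumption X f gradf c Jc L \<gamma> \<longleftrightarrow>
     open X \<and> convex X \<and>
     (\<forall>x\<in>X. (f has_derivative (\<lambda>h. gradf x \<bullet> h)) (at x)) \<and>
     continuous_on X gradf \<and>
     bdd_below (f ` X) \<and> bounded (gradf ` X) \<and>
     (\<forall>x\<in>X. \<forall>y\<in>X. norm (gradf x - gradf y) \<le> L * norm (x - y)) \<and>
     (\<forall>x\<in>X. (c has_derivative (\<lambda>h. Jc x *v h)) (at x)) \<and>
     bounded (c ` X) \<and> bounded (Jc ` X) \<and>
     (\<forall>i. \<forall>x\<in>X. \<forall>y\<in>X. norm (row i (Jc x) - row i (Jc y)) \<le> \<gamma> i * norm (x - y)) \<and>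
     (\<exists>\<sigma>>0. \<forall>x\<in>X. \<forall>v. \<sigma> * norm v \<le> norm (transpose (Jc x) *v v))"

definition matrix_assumption ::
  "real^'n^'n \<Rightarrow> real^'n^'m \<Rightarrow> real \<Rightarrow> real \<Rightarrow> bool" where
  "matrix_assumption H J \<kappa>H \<zeta> \<longleftrightarrow>
     transpose H = H \<and> onorm (\<lambda>u. H *v u) \<le> \<kappa>H \<and>
     (\<forall>u. J *v u = 0 \<longrightarrow> \<zeta> * (norm u)\<^sup>2 \<le> u \<bullet> (H *v u))"

text \<open>Gradient Assumption: under the (conditional) probability law P of omega at
  iteration k, the stochastic gradient gbar is unbiased for g with variance at most M.\<close>
definition gradient_assumption ::
  "'w measure \<Rightarrow> ('w \<Rightarrow> real^'n) \<Rightarrow> real^'n \<Rightarrow> real \<Rightarrow> bool" where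
  "gradient_assumption P gbar g M \<longleftrightarrow>
     prob_space P \<and> gbar \<in> borel_measurable P \<and>
     integrable P gbar \<and> integral\<^sup>L P gbar = g \<and>
     integrable P (\<lambda>\<omega>. (norm (gbar \<omega> - g))\<^sup>2) \<and>
     integral\<^sup>L P (\<lambda>\<omega>. (norm (gbar \<omega> - g))\<^sup>2) \<le> M"

end

theory Submission
  imports Defs
begin

text \<open>The stochastic and deterministic steps solve KKT systems with the same matrix
  [H, J^T; J, 0], which is nonsingular because H is positive definite on the null space of J
  and J^T is injective. Hence dbar = d + T e with e = g - gbar and T a linear solution operator
  with values in the null space of J. Pairing the system for T e with T e gives
  (T e)^T H (T e) = e^T T e and \<zeta> |T e|^2 \<le> e^T T e \<le> |e| |T e|, so 0 \<le> e^T T e \<le> |e|^2 / \<zeta>.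
  As e is centred, all terms of gbar^T dbar and dbar^T H dbar that are linear in e have
  expectation zero, leaving E[gbar^T dbar] = g^T d - E[e^T T e] and
  E[dbar^T H dbar] = d^T H d + E[e^T T e].\<close>

lemma inner_vector_matrix_mult:
  fixes A :: "real^'n^'m"
  shows "v \<bullet> (w v* A) = (A *v v) \<bullet> w"
  by (metis dot_lmul_matrix inner_commute)

lemma inner_symmetric_matrix:
  fixes H :: "real^'n^'n"
  assumes "transpose H = H"
  shows "a \<bullet> (H *v b) = (H *v a) \<bullet> b"
  by (metis assms inner_vector_matrix_mult vector_transpose_matrix)

definition kkt_map :: "real^'n^'n \<Rightarrow> real^'n^'m \<Rightarrow> ((real^'n) \<times> (real^'m)) \<Rightarrow> ((real^'n) \<times> (real^'m))"
  where "kkt_map H J p = (H *v fst p + transpose J *v snd p, J *v fst p)"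

lemma linear_kkt_map: "linear (kkt_map H J)"
  by (auto simp: linear_iff kkt_map_def matrix_vector_right_distrib algebra_simps)

lemma inj_kkt_map:
  fixes H :: "real^'n^'n" and J :: "real^'n^'m"
  assumes pos_def: "\<forall>u. J *v u = 0 \<longrightarrow> u \<noteq> 0 \<longrightarrow> 0 < u \<bullet> (H *v u)"
    and transpose_inj: "\<forall>w. transpose J *v w = 0 \<longrightarrow> w = 0"
  shows "inj (kkt_map H J)"
  unfolding linear_injective_0[OF linear_kkt_map]
proof (intro allI impI)
  fix p :: "(real^'n) \<times> (real^'m)"
  obtain u w where p: "p = (u, w)" by fastforce
  assume "kkt_map H J p = 0"
  then have stat: "H *v u + transpose J *v w = 0" and feas: "J *v u = 0"
    by (auto simp: kkt_map_def p prod_eq_iff)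
  have "u \<bullet> (H *v u) = 0"
    using arg_cong[OF stat, of "\<lambda>z. u \<bullet> z"] feas
    by (simp add: inner_add_right inner_vector_matrix_mult)
  then have "u = 0" using pos_def feas by fastforce
  with stat transpose_inj have "w = 0" by simp
  with \<open>u = 0\<close> show "p = 0" by (simp add: p zero_prod_def)
qed

lemma kkt_solution_operator:
  fixes H :: "real^'n^'n" and J :: "real^'n^'m"
  assumes pos_def: "\<forall>u. J *v u = 0 \<longrightarrow> u \<noteq> 0 \<longrightarrow> 0 < u \<bullet> (H *v u)"
    and transpose_inj: "\<forall>w. transpose J *v w = 0 \<longrightarrow> w = 0"
  obtains T :: "real^'n \<Rightarrow> real^'n" and S :: "real^'n \<Rightarrow> real^'m"
  where "bounded_linear T"
    and "\<And>e. H *v T e + transpose J *v S e = e \<and> J *v T e = 0"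
    and "\<And>e u w. H *v u + transpose J *v w = e \<Longrightarrow> J *v u = 0 \<Longrightarrow> u = T e"
proof -
  have inj: "inj (kkt_map H J)" by (rule inj_kkt_map[OF assms])
  then have "surj (kkt_map H J)"
    using linear_injective_imp_surjective[OF linear_kkt_map] by blast
  then obtain G where G: "linear G" "kkt_map H J \<circ> G = id"
    using linear_surjective_right_inverse[OF linear_kkt_map] by blast
  define T where "T e = fst (G (e, 0))" for e
  define S where "S e = snd (G (e, 0))" for e
  have solves: "kkt_map H J (T e, S e) = (e, 0)" for e
    using pointfree_idE[OF G(2)] by (simp add: T_def S_def)
  show thesis
  proof
    have "linear (fst \<circ> G \<circ> (\<lambda>e. (e, 0)))"
      by (intro linear_compose G(1) linear_fst) (simp add: linear_iff)
    then show "bounded_linear T"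
      by (simp add: T_def[abs_def] comp_def flip: linear_conv_bounded_linear)
    show "H *v T e + transpose J *v S e = e \<and> J *v T e = 0" for e
      using solves[of e] by (simp add: kkt_map_def)
    show "u = T e" if "H *v u + transpose J *v w = e" "J *v u = 0" for e u w
    proof -
      have "kkt_map H J (u, w) = kkt_map H J (T e, S e)"
        using that solves[of e] by (simp add: kkt_map_def)
      then show ?thesis using inj by (auto dest: injD)
    qed
  qed
qed

lemma kkt_null_space_curvature_bounds:
  fixes H :: "real^'n^'n" and J :: "real^'n^'m"
  assumes curv: "\<forall>u. J *v u = 0 \<longrightarrow> \<zeta> * (norm u)\<^sup>2 \<le> u \<bullet> (H *v u)" and "0 < \<zeta>"
    and stat: "H *v v + transpose J *v w = e" and feas: "J *v v = 0"
  shows "v \<bullet> (H *v v) = e \<bullet> v" and "0 \<le> e \<bullet> v" and "e \<bullet> v \<le> (norm e)\<^sup>2 / \<zeta>"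
proof -
  show vHv: "v \<bullet> (H *v v) = e \<bullet> v"
    using arg_cong[OF stat, of "\<lambda>z. v \<bullet> z"] feas
    by (simp add: inner_add_right inner_vector_matrix_mult inner_commute)
  have lower: "\<zeta> * (norm v)\<^sup>2 \<le> e \<bullet> v" using curv feas vHv by auto
  then show "0 \<le> e \<bullet> v" using \<open>0 < \<zeta>\<close> by (smt (verit) mult_nonneg_nonneg zero_le_power2)
  have upper: "e \<bullet> v \<le> norm e * norm v" by (rule norm_cauchy_schwarz)
  have "\<zeta> * norm v \<le> norm e"
  proof (cases "v = 0")
    case False
    then have "(\<zeta> * norm v) * norm v \<le> norm e * norm v"
      using lower upper unfolding power2_eq_square mult.assoc by linarith
    with False show ?thesis by simp
  qed (use \<open>0 < \<zeta>\<close> in simp)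
  then have "norm e * norm v \<le> norm e * (norm e / \<zeta>)"
    using \<open>0 < \<zeta>\<close> by (intro mult_left_mono) (simp_all add: field_simps)
  with upper show "e \<bullet> v \<le> (norm e)\<^sup>2 / \<zeta>" by (simp add: power2_eq_square)
qed

lemma kkt_solution_operator_bounds:
  fixes H :: "real^'n^'n" and J :: "real^'n^'m"
  assumes "matrix_assumption H J \<kappa>H \<zeta>" and "0 < \<zeta>"
    and transpose_inj: "\<forall>w. transpose J *v w = 0 \<longrightarrow> w = 0"
  obtains T :: "real^'n \<Rightarrow> real^'n"
  where "bounded_linear T"
    and "\<forall>z. T z \<bullet> (H *v T z) = z \<bullet> T z"
    and "\<forall>z. 0 \<le> z \<bullet> T z \<and> z \<bullet> T z \<le> (norm z)\<^sup>2 / \<zeta>"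
    and "\<And>e u w. H *v u + transpose J *v w = e \<Longrightarrow> J *v u = 0 \<Longrightarrow> u = T e"
proof -
  have curv: "\<forall>u. J *v u = 0 \<longrightarrow> \<zeta> * (norm u)\<^sup>2 \<le> u \<bullet> (H *v u)"
    using assms(1) by (simp add: matrix_assumption_def)
  then have pos_def: "\<forall>u. J *v u = 0 \<longrightarrow> u \<noteq> 0 \<longrightarrow> 0 < u \<bullet> (H *v u)"
    using \<open>0 < \<zeta>\<close> by (smt (verit) mult_pos_pos zero_less_norm_iff zero_less_power)
  obtain T S where T: "bounded_linear T"
    and sol: "\<And>e. H *v T e + transpose J *v S e = e \<and> J *v T e = 0"
    and uniq: "\<And>e u w. H *v u + transpose J *v w = e \<Longrightarrow> J *v u = 0 \<Longrightarrow> u = T e"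
    using kkt_solution_operator[OF pos_def transpose_inj] by metis
  have "T z \<bullet> (H *v T z) = z \<bullet> T z \<and> 0 \<le> z \<bullet> T z \<and> z \<bullet> T z \<le> (norm z)\<^sup>2 / \<zeta>" for z
    using kkt_null_space_curvature_bounds[OF curv \<open>0 < \<zeta>\<close>, where v = "T z" and w = "S z" and e = z] sol[of z]
    by blast
  then show thesis using that[OF T] uniq by blast
qed

lemma standing_assumption_transpose_jacobian_inj:
  assumes "standing_assumption X f gradf c Jc L \<gamma>" and "x \<in> X"
    and "transpose (Jc x) *v w = 0"
  shows "w = 0"
proof -
  obtain \<sigma> where "\<sigma> > 0" and "\<sigma> * norm w \<le> norm (transpose (Jc x) *v w)"
    using assms(1,2) by (auto simp: standing_assumption_def)
  with assms(3) show ?thesis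
    by (metis mult_pos_pos norm_eq_zero norm_zero not_le zero_less_norm_iff)
qed

lemma (in prob_space) expectation_inner_bounded_linear_centered:
  fixes X :: "'a \<Rightarrow> 'b::euclidean_space" and T :: "'b \<Rightarrow> 'c::euclidean_space"
  assumes "integrable M X" "expectation X = 0" "bounded_linear T"
  shows "integrable M (\<lambda>\<omega>. a \<bullet> T (X \<omega>))" and "expectation (\<lambda>\<omega>. a \<bullet> T (X \<omega>)) = 0"
proof -
  have lin: "bounded_linear (\<lambda>z. a \<bullet> T z)"
    using bounded_linear_compose[OF bounded_linear_inner_right assms(3)] .
  show "integrable M (\<lambda>\<omega>. a \<bullet> T (X \<omega>))" by (rule integrable_bounded_linear[OF lin assms(1)])
  show "expectation (\<lambda>\<omega>. a \<bullet> T (X \<omega>)) = 0"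
    using integral_bounded_linear[OF lin assms(1)] assms(2,3)
    by (simp add: linear_simps(3) bounded_linear.linear)
qed

lemma (in prob_space) expectation_quadratic_form_bounds:
  fixes X :: "'a \<Rightarrow> 'b::euclidean_space" and T :: "'b \<Rightarrow> 'b"
  assumes X: "integrable M X" and X2: "integrable M (\<lambda>\<omega>. (norm (X \<omega>))\<^sup>2)"
    and B: "expectation (\<lambda>\<omega>. (norm (X \<omega>))\<^sup>2) \<le> B" and "0 < \<zeta>"
    and T: "bounded_linear T" and T_bounds: "\<forall>z. 0 \<le> z \<bullet> T z \<and> z \<bullet> T z \<le> (norm z)\<^sup>2 / \<zeta>"
  shows "integrable M (\<lambda>\<omega>. X \<omega> \<bullet> T (X \<omega>))"
    and "0 \<le> expectation (\<lambda>\<omega>. X \<omega> \<bullet> T (X \<omega>))"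
    and "expectation (\<lambda>\<omega>. X \<omega> \<bullet> T (X \<omega>)) \<le> B / \<zeta>"
proof -
  have X2\<zeta>: "integrable M (\<lambda>\<omega>. (norm (X \<omega>))\<^sup>2 / \<zeta>)" using X2 by simp
  show int: "integrable M (\<lambda>\<omega>. X \<omega> \<bullet> T (X \<omega>))"
  proof (rule Bochner_Integration.integrable_bound[OF X2\<zeta>])
    show "(\<lambda>\<omega>. X \<omega> \<bullet> T (X \<omega>)) \<in> borel_measurable M"
      using X integrable_bounded_linear[OF T X] by (intro borel_measurable_inner) auto
    show "AE \<omega> in M. norm (X \<omega> \<bullet> T (X \<omega>)) \<le> norm ((norm (X \<omega>))\<^sup>2 / \<zeta>)"
      using T_bounds by (intro AE_I2) (smt (verit) real_norm_def)
  qed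
  show "0 \<le> expectation (\<lambda>\<omega>. X \<omega> \<bullet> T (X \<omega>))"
    using T_bounds by (intro integral_nonneg_AE AE_I2) auto
  have "expectation (\<lambda>\<omega>. X \<omega> \<bullet> T (X \<omega>)) \<le> expectation (\<lambda>\<omega>. (norm (X \<omega>))\<^sup>2 / \<zeta>)"
    using T_bounds int X2\<zeta> by (intro integral_mono) auto
  also have "\<dots> \<le> B / \<zeta>" using B \<open>0 < \<zeta>\<close> by (simp add: divide_right_mono)
  finally show "expectation (\<lambda>\<omega>. X \<omega> \<bullet> T (X \<omega>)) \<le> B / \<zeta>" .
qed

lemma (in prob_space) expectations_under_affine_solution:
  fixes G D :: "'a \<Rightarrow> real^'n" and H :: "real^'n^'n" and T :: "real^'n \<Rightarrow> real^'n"
  assumes G: "integrable M G" "expectation G = g"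
    and var: "integrable M (\<lambda>\<omega>. (norm (G \<omega> - g))\<^sup>2)" "expectation (\<lambda>\<omega>. (norm (G \<omega> - g))\<^sup>2) \<le> B"
    and "0 < \<zeta>" and T: "bounded_linear T"
    and T_bounds: "\<forall>z. 0 \<le> z \<bullet> T z \<and> z \<bullet> T z \<le> (norm z)\<^sup>2 / \<zeta>"
    and T_curv: "\<forall>z. T z \<bullet> (H *v T z) = z \<bullet> T z" and sym: "transpose H = H"
    and D: "\<forall>\<omega>\<in>space M. D \<omega> = d + T (g - G \<omega>)"
  shows "expectation (\<lambda>\<omega>. G \<omega> \<bullet> D \<omega>) \<le> g \<bullet> d"
    and "g \<bullet> d - B / \<zeta> \<le> expectation (\<lambda>\<omega>. G \<omega> \<bullet> D \<omega>)"
    and "d \<bullet> (H *v d) \<le> expectation (\<lambda>\<omega>. D \<omega> \<bullet> (H *v D \<omega>))"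
proof -
  define e where "e \<omega> = g - G \<omega>" for \<omega>
  have e: "integrable M e" "expectation e = 0"
    using G by (simp_all add: e_def[abs_def] prob_space)
  have e2: "integrable M (\<lambda>\<omega>. (norm (e \<omega>))\<^sup>2)" "expectation (\<lambda>\<omega>. (norm (e \<omega>))\<^sup>2) \<le> B"
    using var by (simp_all add: e_def norm_minus_commute)
  note quad = expectation_quadratic_form_bounds[OF e(1) e2 \<open>0 < \<zeta>\<close> T T_bounds]
  note lin_T = expectation_inner_bounded_linear_centered[OF e T]
  note lin_e = expectation_inner_bounded_linear_centered[OF e bounded_linear_ident]
  have G_e: "G \<omega> = g - e \<omega>" and D_e: "\<omega> \<in> space M \<Longrightarrow> D \<omega> = d + T (e \<omega>)" for \<omega>
    using D by (simp_all add: e_def)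
  have "expectation (\<lambda>\<omega>. G \<omega> \<bullet> D \<omega>)
      = expectation (\<lambda>\<omega>. g \<bullet> d + (g \<bullet> T (e \<omega>) - d \<bullet> e \<omega>) - e \<omega> \<bullet> T (e \<omega>))"
    by (intro Bochner_Integration.integral_cong refl)
      (auto simp: G_e D_e inner_add_right inner_diff_left inner_diff_right inner_commute)
  also have "\<dots> = g \<bullet> d - expectation (\<lambda>\<omega>. e \<omega> \<bullet> T (e \<omega>))"
    using lin_T lin_e quad(1) by (simp add: prob_space)
  finally have "expectation (\<lambda>\<omega>. G \<omega> \<bullet> D \<omega>) = g \<bullet> d - expectation (\<lambda>\<omega>. e \<omega> \<bullet> T (e \<omega>))" .
  then show "expectation (\<lambda>\<omega>. G \<omega> \<bullet> D \<omega>) \<le> g \<bullet> d"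
    and "g \<bullet> d - B / \<zeta> \<le> expectation (\<lambda>\<omega>. G \<omega> \<bullet> D \<omega>)"
    using quad(2,3) by simp_all
  have D_quad: "D \<omega> \<bullet> (H *v D \<omega>) = d \<bullet> (H *v d) + 2 * ((H *v d) \<bullet> T (e \<omega>)) + e \<omega> \<bullet> T (e \<omega>)"
    if "\<omega> \<in> space M" for \<omega>
  proof -
    have "D \<omega> \<bullet> (H *v D \<omega>) = d \<bullet> (H *v d) + (d \<bullet> (H *v T (e \<omega>)) + T (e \<omega>) \<bullet> (H *v d))
        + T (e \<omega>) \<bullet> (H *v T (e \<omega>))"
      using that by (simp add: D_e matrix_vector_right_distrib inner_add_left inner_add_right)
    then show ?thesis
      using T_curv inner_symmetric_matrix[OF sym, of d "T (e \<omega>)"] inner_commute[of "T (e \<omega>)" "H *v d"]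
      by simp
  qed
  have "expectation (\<lambda>\<omega>. D \<omega> \<bullet> (H *v D \<omega>))
      = expectation (\<lambda>\<omega>. d \<bullet> (H *v d) + 2 * ((H *v d) \<bullet> T (e \<omega>)) + e \<omega> \<bullet> T (e \<omega>))"
    using D_quad by (intro Bochner_Integration.integral_cong refl)
  also have "\<dots> = d \<bullet> (H *v d) + expectation (\<lambda>\<omega>. e \<omega> \<bullet> T (e \<omega>))"
    using lin_T quad(1) by (simp add: prob_space)
  finally show "d \<bullet> (H *v d) \<le> expectation (\<lambda>\<omega>. D \<omega> \<bullet> (H *v D \<omega>))"
    using quad(2) by simp
qed

theorem lemma3p8:
  fixes X :: "(real^'n) set" and f :: "real^'n \<Rightarrow> real" and gradf :: "real^'n \<Rightarrow> real^'n"
    and c :: "real^'n \<Rightarrow> real^'m" and Jc :: "real^'n \<Rightarrow> real^'n^'m"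
    and L :: real and \<gamma> :: "'m \<Rightarrow> real" and \<kappa>H \<zeta> M :: real
    and x :: "nat \<Rightarrow> real^'n" and H :: "nat \<Rightarrow> real^'n^'n"
    and P :: "nat \<Rightarrow> 'w measure" and gbar :: "nat \<Rightarrow> 'w \<Rightarrow> real^'n"
    and dbar :: "nat \<Rightarrow> 'w \<Rightarrow> real^'n" and ybar :: "nat \<Rightarrow> 'w \<Rightarrow> real^'m"
    and d :: "nat \<Rightarrow> real^'n" and y :: "nat \<Rightarrow> real^'m"
    and k :: nat
  assumes SA: "standing_assumption X f gradf c Jc L \<gamma>"
    and iter_in: "\<forall>j. x j \<in> X"
    and zeta_pos: "0 < \<zeta>"
    and MA: "\<forall>j. matrix_assumption (H j) (Jc (x j)) \<kappa>H \<zeta>"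
    and GA: "\<forall>j. gradient_assumption (P j) (gbar j) (gradf (x j)) M"
    and stoch_sys: "\<forall>j. \<forall>\<omega>\<in>space (P j).
           H j *v dbar j \<omega> + transpose (Jc (x j)) *v ybar j \<omega> = - gbar j \<omega>
         \<and> Jc (x j) *v dbar j \<omega> = - c (x j)"
    and det_sys: "\<forall>j. H j *v d j + transpose (Jc (x j)) *v y j = - gradf (x j)
         \<and> Jc (x j) *v d j = - c (x j)"
  shows "gradf (x k) \<bullet> d k \<ge> integral\<^sup>L (P k) (\<lambda>\<omega>. gbar k \<omega> \<bullet> dbar k \<omega>)
       \<and> integral\<^sup>L (P k) (\<lambda>\<omega>. gbar k \<omega> \<bullet> dbar k \<omega>) \<ge> gradf (x k) \<bullet> d k - M / \<zeta>
       \<and> d k \<bullet> (H k *v d k) \<le> integral\<^sup>L (P k) (\<lambda>\<omega>. dbar k \<omega> \<bullet> (H k *v dbar k \<omega>))"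
proof -
  interpret prob_space "P k" using GA by (simp add: gradient_assumption_def)
  have sym: "transpose (H k) = H k" using MA by (simp add: matrix_assumption_def)
  have "\<forall>w. transpose (Jc (x k)) *v w = 0 \<longrightarrow> w = 0"
    using standing_assumption_transpose_jacobian_inj[OF SA] iter_in by blast
  then obtain T where T: "bounded_linear T"
    and T_curv: "\<forall>z. T z \<bullet> (H k *v T z) = z \<bullet> T z"
    and T_bounds: "\<forall>z. 0 \<le> z \<bullet> T z \<and> z \<bullet> T z \<le> (norm z)\<^sup>2 / \<zeta>"
    and uniq: "\<And>e u w. H k *v u + transpose (Jc (x k)) *v w = e \<Longrightarrow> Jc (x k) *v u = 0 \<Longrightarrow> u = T e"
    using kkt_solution_operator_bounds[OF MA[rule_format] zeta_pos] by metis
  have dbar_affine: "\<forall>\<omega>\<in>space (P k). dbar k \<omega> = d k + T (gradf (x k) - gbar k \<omega>)"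
  proof
    fix \<omega> assume "\<omega> \<in> space (P k)"
    then have "H k *v (dbar k \<omega> - d k) + transpose (Jc (x k)) *v (ybar k \<omega> - y k) = gradf (x k) - gbar k \<omega>"
      and "Jc (x k) *v (dbar k \<omega> - d k) = 0"
      using stoch_sys det_sys by (auto simp: matrix_vector_mult_diff_distrib algebra_simps)
    then show "dbar k \<omega> = d k + T (gradf (x k) - gbar k \<omega>)"
      using uniq by (metis add.commute diff_add_cancel)
  qed
  have "integrable (P k) (gbar k)" "expectation (gbar k) = gradf (x k)"
    "integrable (P k) (\<lambda>\<omega>. (norm (gbar k \<omega> - gradf (x k)))\<^sup>2)"
    "expectation (\<lambda>\<omega>. (norm (gbar k \<omega> - gradf (x k)))\<^sup>2) \<le> M"
    using GA by (simp_all add: gradient_assumption_def)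
  from expectations_under_affine_solution[OF this zeta_pos T T_bounds T_curv sym dbar_affine]
  show ?thesis by simp
qed

end
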